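(* Let $n$ be a positive integer and let $D_{2n}=\langle a,x\mid a^n=e,\ x^2=e,\ xax=a^{-1}\rangle$ be the dihedral group of order $2n$. Then: (1) For every positive integer $m$ with $m\mid n$ and $\gcd(m,\tfrac nm)=1$, $D_{2n}\simeq\mathbb{Z}_m\rtimes_\varphi D_{2n/m}$, where, writing $D_{2n/m}=\langle a,x\mid a^{n/m}=e,x^2=e,xax=a^{-1}\rangle$, the homomorphism $\varphi\colon D_{2n/m}\to\mathrm{Aut}(\mathbb{Z}_m)$ is given by $\varphi(a)(1)=1$ and $\varphi(x)(1)=-1$. (2) If $n$ is even, then $D_{2n}\simeq D_n\rtimes_\varphi\mathbb{Z}_2$, where, writing $D_n=\langle a,x\mid a^{n/2}=e,x^2=e,xax=a^{-1}\rangle$, $\varphi(1)$ is the automorphism of $D_n$ with $\varphi(1)(a)=a^{-1}$ and $\varphi(1)(x)=ax$. (3) If $2\mid n$ and $4\nmid n$, then $D_{2n}\simeq D_n\times\mathbb{Z}_2$. (4) If $D_{2n}\simeq X\rtimes Y$ for some groups $X,Y$ with $|X|>1$, $|Y|>1$ and some semidirect product structure, then either (a) $X\simeq\mathbb{Z}_m$ and $Y\simeq D_{2n/m}$ for some $m\mid n$ with $\gcd(m,\tfrac nm)=1$, or (b) $2\mid n$, $X\simeq D_n$ and $Y\simeq\mathbb{Z}_2$.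
   Context: $D_{2k}$ denotes the dihedral group of order $2k$ (so $D_2\simeq\mathbb{Z}_2$, $D_4\simeq\mathbb{Z}_2\times\mathbb{Z}_2$). $\mathbb{Z}_m=\langle 1\rangle$ is the cyclic group of order $m$ written additively. For groups $N,H$ and a homomorphism $\varphi\colon H\to\mathrm{Aut}(N)$, $N\rtimes_\varphi H$ is $N\times H$ with product $(n_1,h_1)(n_2,h_2)=(n_1\varphi(h_1)(n_2),h_1h_2)$; a direct product counts as a semidirect product with trivial $\varphi$. *)

theory Defs
  imports "HOL-Algebra.Algebra"
begin

text \<open>The dihedral group of order 2n (n > 0): the element (i, b) stands for
  a^i x^b with 0 \<le> i < n, using x a^j = a^(-j) x.\<close>
definition dihedral_group :: "nat \<Rightarrow> (int \<times> bool) monoid" where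
  "dihedral_group n =
     \<lparr>carrier = {0..<int n} \<times> UNIV,
      monoid.mult = (\<lambda>(i, b) (j, c). ((if b then i - j else i + j) mod int n, b \<noteq> c)),
      one = (0, False)\<rparr>"

definition dih_a :: "nat \<Rightarrow> int \<times> bool" where
  "dih_a n = (1 mod int n, False)"

definition dih_x :: "nat \<Rightarrow> int \<times> bool" where
  "dih_x n = (0, True)"

definition semidirect_product ::
  "('a, 'c) monoid_scheme \<Rightarrow> ('b, 'd) monoid_scheme \<Rightarrow> ('b \<Rightarrow> 'a \<Rightarrow> 'a) \<Rightarrow> ('a \<times> 'b) monoid" where
  "semidirect_product N H \<phi> =
     \<lparr>carrier = carrier N \<times> carrier H,
      monoid.mult = (\<lambda>(n1, h1) (n2, h2). (n1 \<otimes>\<^bsub>N\<^esub> \<phi> h1 n2, h1 \<otimes>\<^bsub>H\<^esub> h2)),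
      one = (\<one>\<^bsub>N\<^esub>, \<one>\<^bsub>H\<^esub>)\<rparr>"

end

theory Submission
  imports Defs
begin

text \<open>
  Parts (1)--(3) are explicit isomorphisms: the Chinese remainder maps
  a^i x^b \<mapsto> (i mod m, a^(i mod n/m) x^b) for (1) and a^i x^b \<mapsto> (a^(i mod n/2) x^b, i mod 2)
  for (3), and (a^i x^b, e) \<mapsto> a^(2i) x^b (a x)^e for (2). An action of a dihedral group or of
  \<open>\<int>\<^sub>2\<close> is determined by its values on generators, so every action with the prescribed
  values gives the same semidirect product.

  For (4), the factors of \<open>D\<^sub>2\<^sub>n \<cong> X \<rtimes> Y\<close> become a normal subgroup N and a complement
  H of \<open>D\<^sub>2\<^sub>n\<close>. If N consists of rotations, it is the cyclic subgroup of order m = |N|.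
  As the cyclic group of rotations has only one subgroup of each order, the rotations in
  H form a subgroup whose order is coprime to m, hence divides n/m; they make up at least
  half of H, and |H| = 2n/m. So H is generated by a^m and a reflection, a copy of
  \<open>D\<^sub>2\<^sub>n\<^sub>/\<^sub>m\<close>, and m is coprime to n/m. Otherwise N contains a reflection and therefore, by
  normality, all squares a^(2t). As |H| > 1, N is not the whole group, which forces n to
  be even, N = \<langle>a^2, a^j x\<rangle> \<cong> \<open>D\<^sub>n\<close> and |H| = 2.
\<close>

lemma int_eq_of_dvd_diff:
  fixes i j :: int
  assumes "n dvd i - j" "0 \<le> i" "i < n" "0 \<le> j" "j < n"
  shows "i = j"
  using assms by (metis mod_eq_dvd_iff mod_pos_pos_trivial)

lemma eq_of_mod_eq_coprime:
  fixes i j :: int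
  assumes "coprime m d" "0 \<le> i" "i < int (m * d)" "0 \<le> j" "j < int (m * d)"
    and "i mod int m = j mod int m" "i mod int d = j mod int d"
  shows "i = j"
proof -
  have "int m dvd i - j" "int d dvd i - j" using assms(6,7) by (simp_all add: mod_eq_dvd_iff)
  then have "int (m * d) dvd i - j" using assms(1) by (simp add: divides_mult)
  then show ?thesis using assms(2-5) by (rule int_eq_of_dvd_diff)
qed

lemma iso_of_inj_card:
  assumes "f \<in> hom G H" "inj_on f (carrier G)" "finite (carrier H)"
    and "card (carrier G) = card (carrier H)"
  shows "f \<in> iso G H"
proof -
  have "f ` carrier G = carrier H"
    using card_subset_eq[OF assms(3) hom_carrier[OF assms(1)]] card_image[OF assms(2)] assms(4)
    by simp
  then show ?thesis using assms(1,2) by (simp add: iso_iff)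
qed

lemma is_iso_image:
  assumes "f \<in> hom G H" "inj_on f (carrier G)" "f ` carrier G = S"
  shows "G \<cong> H\<lparr>carrier := S\<rparr>"
  using assms by (auto intro!: is_isoI simp: iso_def hom_def bij_betw_def)

lemma (in group) pow_hom_integer_mod_group:
  assumes "m > 0" "g \<in> carrier G" "g [^] m = \<one>"
  shows "(\<lambda>t. g [^] nat t) \<in> hom (integer_mod_group m) G"
proof (rule homI)
  have pow_mod: "g [^] (k mod m) = g [^] k" for k :: nat
  proof -
    have "g [^] k = g [^] (m * (k div m)) \<otimes> g [^] (k mod m)"
      by (simp add: nat_pow_mult assms(2))
    also have "\<dots> = g [^] (k mod m)"
      by (simp add: nat_pow_pow[symmetric] assms)
    finally show ?thesis by simp
  qed
  fix x y assume "x \<in> carrier (integer_mod_group m)" "y \<in> carrier (integer_mod_group m)"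
  then have "0 \<le> x" "0 \<le> y" using assms(1) by (auto simp: carrier_integer_mod_group)
  then have "nat ((x + y) mod int m) = (nat x + nat y) mod m"
    by (simp add: nat_mod_distrib nat_add_distrib)
  then show "g [^] nat (x \<otimes>\<^bsub>integer_mod_group m\<^esub> y) = g [^] nat x \<otimes> g [^] nat y"
    by (simp add: pow_mod nat_pow_mult assms(2))
qed (use assms(2) in simp)

lemma (in group) iso_integer_mod_group_two:
  assumes "subgroup H G" "card H = 2"
  shows "G\<lparr>carrier := H\<rparr> \<cong> integer_mod_group 2"
proof -
  obtain h where h: "H = {\<one>, h}" "h \<noteq> \<one>"
  proof -
    obtain x y where "H = {x, y}" "x \<noteq> y" using card_2_iff[THEN iffD1, OF assms(2)] by blast
    then show ?thesis using that subgroup.one_closed[OF assms(1)] by auto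
  qed
  have hG: "h \<in> carrier G" using h assms(1) subgroup.subset by blast
  have "h \<otimes> h \<in> H" using h(1) subgroup.m_closed[OF assms(1)] by blast
  moreover have "h \<otimes> h \<noteq> h" using h(2) hG l_cancel_one[OF hG hG] by simp
  ultimately have hh: "h [^] (2::nat) = \<one>" using h(1) hG by (simp add: numeral_2_eq_2)
  have Z2: "carrier (integer_mod_group 2) = {0, 1}" by (auto simp: carrier_integer_mod_group)
  have "inj_on (\<lambda>t. h [^] nat t) (carrier (integer_mod_group 2))"
    using h(2) hG by (simp add: Z2)
  moreover have "(\<lambda>t. h [^] nat t) ` carrier (integer_mod_group 2) = H"
    using h hG by (simp add: Z2)
  ultimately have "integer_mod_group 2 \<cong> G\<lparr>carrier := H\<rparr>"
    using is_iso_image[OF pow_hom_integer_mod_group[OF _ hG hh]] by simp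
  then show ?thesis by (rule group.iso_sym[OF group_integer_mod_group])
qed

lemma integer_mod_group_hom_ext:
  assumes "m > 0" "group G" "f \<in> hom (integer_mod_group m) G" "f' \<in> hom (integer_mod_group m) G"
    and "f (1 mod int m) = f' (1 mod int m)" "k \<in> carrier (integer_mod_group m)"
  shows "f k = f' k"
proof -
  have one: "1 mod int m \<in> carrier (integer_mod_group m)"
    using assms(1) by (simp add: carrier_integer_mod_group)
  have "(1 mod int m) [^]\<^bsub>integer_mod_group m\<^esub> nat k = k"
    using assms(1,6) by (simp add: carrier_integer_mod_group mod_simps)
  moreover have "f ((1 mod int m) [^]\<^bsub>integer_mod_group m\<^esub> nat k) =
      f' ((1 mod int m) [^]\<^bsub>integer_mod_group m\<^esub> nat k)"
    using hom_nat_pow[OF assms(3) one] hom_nat_pow[OF assms(4) one] assms(2,5)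
    by (simp del: pow_integer_mod_group)
  ultimately show ?thesis by simp
qed

lemma carrier_AutoGroup [simp]: "carrier (AutoGroup G) = auto G"
  by (simp add: AutoGroup_def)

lemma one_AutoGroup [simp]: "\<one>\<^bsub>AutoGroup G\<^esub> = (\<lambda>x\<in>carrier G. x)"
  by (simp add: AutoGroup_def BijGroup_def)

lemma mult_AutoGroup:
  "f \<in> auto G \<Longrightarrow> g \<in> auto G \<Longrightarrow> f \<otimes>\<^bsub>AutoGroup G\<^esub> g = compose (carrier G) f g"
  by (simp add: AutoGroup_def BijGroup_def auto_def)

lemma auto_eqI:
  "f \<in> auto G \<Longrightarrow> g \<in> auto G \<Longrightarrow> (\<And>x. x \<in> carrier G \<Longrightarrow> f x = g x) \<Longrightarrow> f = g"
  by (rule extensionalityI[of _ "carrier G"]) (auto simp: auto_def Bij_def)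

section \<open>Semidirect products\<close>

lemma carrier_semidirect_product [simp]:
  "carrier (semidirect_product N H \<phi>) = carrier N \<times> carrier H"
  by (simp add: semidirect_product_def)

lemma mult_semidirect_product [simp]:
  "(x, h) \<otimes>\<^bsub>semidirect_product N H \<phi>\<^esub> (y, k) = (x \<otimes>\<^bsub>N\<^esub> \<phi> h y, h \<otimes>\<^bsub>H\<^esub> k)"
  by (simp add: semidirect_product_def)

lemma one_semidirect_product [simp]:
  "\<one>\<^bsub>semidirect_product N H \<phi>\<^esub> = (\<one>\<^bsub>N\<^esub>, \<one>\<^bsub>H\<^esub>)"
  by (simp add: semidirect_product_def)

lemma semidirect_product_cong:
  assumes "\<And>h x. h \<in> carrier H \<Longrightarrow> x \<in> carrier N \<Longrightarrow> \<phi> h x = \<psi> h x"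
  shows "semidirect_product N H \<phi> \<cong> semidirect_product N H \<psi>"
  by (rule is_isoI, rule isoI[of "\<lambda>x. x"]) (auto simp: hom_def bij_betw_def assms)

text \<open>For finite groups, the cardinality condition replaces \<open>N H = G\<close>.\<close>
definition semidirect_decomposition :: "('a, 'b) monoid_scheme \<Rightarrow> 'a set \<Rightarrow> 'a set \<Rightarrow> bool" where
  "semidirect_decomposition G N H \<longleftrightarrow>
     N \<lhd> G \<and> subgroup H G \<and> N \<inter> H = {\<one>\<^bsub>G\<^esub>} \<and> card N * card H = order G"

context
  fixes N :: "('a, 'c) monoid_scheme" and H :: "('b, 'd) monoid_scheme" and \<phi>
  assumes N: "group N" and H: "group H" and \<phi>: "\<phi> \<in> hom H (AutoGroup N)"
begin

private lemma action_hom: "h \<in> carrier H \<Longrightarrow> \<phi> h \<in> hom N N"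
  using hom_in_carrier[OF \<phi>] by (simp add: auto_def)

private lemma action_closed: "h \<in> carrier H \<Longrightarrow> x \<in> carrier N \<Longrightarrow> \<phi> h x \<in> carrier N"
  by (rule hom_in_carrier[OF action_hom])

private lemma action_one: "x \<in> carrier N \<Longrightarrow> \<phi> \<one>\<^bsub>H\<^esub> x = x"
  using hom_one[OF \<phi> H group.AutoGroup[OF N]] by simp

private lemma action_mult:
  assumes "h \<in> carrier H" "k \<in> carrier H" "x \<in> carrier N"
  shows "\<phi> (h \<otimes>\<^bsub>H\<^esub> k) x = \<phi> h (\<phi> k x)"
proof -
  have "\<phi> h \<in> auto N" "\<phi> k \<in> auto N" using hom_in_carrier[OF \<phi>] assms(1,2) by simp_all
  then show ?thesis
    using hom_mult[OF \<phi> assms(1,2)] assms(3) by (simp add: mult_AutoGroup compose_def)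
qed

private lemma action_fixes_one: "h \<in> carrier H \<Longrightarrow> \<phi> h \<one>\<^bsub>N\<^esub> = \<one>\<^bsub>N\<^esub>"
  using hom_one[OF action_hom N N] .

lemma group_semidirect_product: "group (semidirect_product N H \<phi>)"
proof -
  interpret N: group N by (rule N)
  interpret H: group H by (rule H)
  show ?thesis
  proof (rule groupI)
    fix x y z assume "x \<in> carrier (semidirect_product N H \<phi>)" "y \<in> carrier (semidirect_product N H \<phi>)"
      "z \<in> carrier (semidirect_product N H \<phi>)"
    then show "x \<otimes>\<^bsub>semidirect_product N H \<phi>\<^esub> y \<otimes>\<^bsub>semidirect_product N H \<phi>\<^esub> z =
        x \<otimes>\<^bsub>semidirect_product N H \<phi>\<^esub> (y \<otimes>\<^bsub>semidirect_product N H \<phi>\<^esub> z)"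
      by (cases x; cases y; cases z) (simp add: action_mult action_closed hom_mult[OF action_hom] N.m_assoc H.m_assoc)
  next
    fix x assume "x \<in> carrier (semidirect_product N H \<phi>)"
    then obtain a h where x: "x = (a, h)" "a \<in> carrier N" "h \<in> carrier H" by auto
    let ?y = "(\<phi> (inv\<^bsub>H\<^esub> h) (inv\<^bsub>N\<^esub> a), inv\<^bsub>H\<^esub> h)"
    have "?y \<otimes>\<^bsub>semidirect_product N H \<phi>\<^esub> x = \<one>\<^bsub>semidirect_product N H \<phi>\<^esub>"
      using x by (simp add: hom_mult[OF action_hom, symmetric] action_fixes_one)
    then show "\<exists>y\<in>carrier (semidirect_product N H \<phi>).
        y \<otimes>\<^bsub>semidirect_product N H \<phi>\<^esub> x = \<one>\<^bsub>semidirect_product N H \<phi>\<^esub>"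
      using x by (intro bexI[of _ ?y]) (auto simp: action_closed)
  qed (auto simp: action_closed action_one)
qed

lemma hom_semidirect_product_fst:
  "(\<lambda>x. (x, \<one>\<^bsub>H\<^esub>)) \<in> hom N (semidirect_product N H \<phi>)"
  by (rule homI) (simp_all add: action_one group.is_monoid[OF H])

lemma hom_semidirect_product_snd:
  "(\<lambda>h. (\<one>\<^bsub>N\<^esub>, h)) \<in> hom H (semidirect_product N H \<phi>)"
  by (rule homI) (simp_all add: action_fixes_one group.is_monoid[OF N])

lemma semidirect_decomposition_semidirect_product:
  "semidirect_decomposition (semidirect_product N H \<phi>) (carrier N \<times> {\<one>\<^bsub>H\<^esub>}) ({\<one>\<^bsub>N\<^esub>} \<times> carrier H)"
  unfolding semidirect_decomposition_def
proof (intro conjI)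
  interpret N: group N by (rule N)
  interpret H: group H by (rule H)
  have "snd \<in> hom (semidirect_product N H \<phi>) H"
    by (rule homI) auto
  then have "kernel (semidirect_product N H \<phi>) H snd \<lhd> semidirect_product N H \<phi>"
    by (intro group_hom.normal_kernel group_hom.intro group_hom_axioms.intro group_semidirect_product H)
  moreover have "kernel (semidirect_product N H \<phi>) H snd = carrier N \<times> {\<one>\<^bsub>H\<^esub>}"
    by (auto simp: kernel_def)
  ultimately show "carrier N \<times> {\<one>\<^bsub>H\<^esub>} \<lhd> semidirect_product N H \<phi>" by simp
  have "group_hom H (semidirect_product N H \<phi>) (\<lambda>h. (\<one>\<^bsub>N\<^esub>, h))"
    by (intro group_hom.intro group_hom_axioms.intro group_semidirect_product hom_semidirect_product_snd H)
  then have "subgroup ((\<lambda>h. (\<one>\<^bsub>N\<^esub>, h)) ` carrier H) (semidirect_product N H \<phi>)"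
    by (rule group_hom.img_is_subgroup)
  moreover have "(\<lambda>h. (\<one>\<^bsub>N\<^esub>, h)) ` carrier H = {\<one>\<^bsub>N\<^esub>} \<times> carrier H" by auto
  ultimately show "subgroup ({\<one>\<^bsub>N\<^esub>} \<times> carrier H) (semidirect_product N H \<phi>)" by simp
qed (auto simp: order_def card_cartesian_product group.is_monoid[OF N] group.is_monoid[OF H])

end

lemma iso_semidirect_decomposition:
  assumes g: "g \<in> iso G G'" and G: "group G" and G': "group G'" and dec: "semidirect_decomposition G N H"
  shows "semidirect_decomposition G' (g ` N) (g ` H)"
  unfolding semidirect_decomposition_def
proof (intro conjI)
  have N: "N \<lhd> G" and H: "subgroup H G" and NH: "N \<inter> H = {\<one>\<^bsub>G\<^esub>}"
    and card: "card N * card H = order G"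
    using dec by (simp_all add: semidirect_decomposition_def)
  have inj: "inj_on g (carrier G)" using g by (simp add: iso_iff)
  show "g ` N \<lhd> G'" by (rule iso_normal_subgroup[OF g G G' N])
  show "subgroup (g ` H) G'" by (rule subgroup.iso_subgroup[OF H G G' g])
  have "g ` N \<inter> g ` H = g ` (N \<inter> H)"
    using subgroup.subset[OF normal_imp_subgroup[OF N]] subgroup.subset[OF H]
    by (intro inj_on_image_Int[OF inj, symmetric])
  then show "g ` N \<inter> g ` H = {\<one>\<^bsub>G'\<^esub>}"
    using NH hom_one[OF iso_imp_homomorphism[OF g] G G'] by simp
  have "card (g ` N) = card N" "card (g ` H) = card H"
    using subgroup.subset[OF normal_imp_subgroup[OF N]] subgroup.subset[OF H]
    by (auto intro!: card_image inj_on_subset[OF inj])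
  then show "card (g ` N) * card (g ` H) = order G'"
    using card iso_same_card[OF is_isoI[OF g]] by (simp add: order_def)
qed

lemma semidirect_decomposition_of_iso:
  assumes G: "group G" and K: "group K" and Q: "group Q" and \<phi>: "\<phi> \<in> hom Q (AutoGroup K)"
    and iso: "G \<cong> semidirect_product K Q \<phi>"
  shows "\<exists>N H. semidirect_decomposition G N H \<and> K \<cong> G\<lparr>carrier := N\<rparr> \<and> Q \<cong> G\<lparr>carrier := H\<rparr>"
proof -
  let ?S = "semidirect_product K Q \<phi>"
  let ?N = "carrier K \<times> {\<one>\<^bsub>Q\<^esub>}" and ?H = "{\<one>\<^bsub>K\<^esub>} \<times> carrier Q"
  have S: "group ?S" by (rule group_semidirect_product[OF K Q \<phi>])
  obtain g where g: "g \<in> iso ?S G"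
    using group.iso_sym[OF G iso] by (auto simp: is_iso_def)
  have dec: "semidirect_decomposition ?S ?N ?H"
    by (rule semidirect_decomposition_semidirect_product[OF K Q \<phi>])
  then have N: "subgroup ?N ?S" and H: "subgroup ?H ?S"
    by (simp_all add: semidirect_decomposition_def normal_imp_subgroup)
  have "K \<cong> ?S\<lparr>carrier := ?N\<rparr>"
    by (rule is_iso_image[OF hom_semidirect_product_fst[OF K Q \<phi>]]) (auto simp: inj_on_def)
  then have "K \<cong> G\<lparr>carrier := g ` ?N\<rparr>" by (rule iso_trans[OF _ is_isoI[OF iso_restrict[OF g S G N]]])
  moreover have "Q \<cong> ?S\<lparr>carrier := ?H\<rparr>"
    by (rule is_iso_image[OF hom_semidirect_product_snd[OF K Q \<phi>]]) (auto simp: inj_on_def)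
  then have "Q \<cong> G\<lparr>carrier := g ` ?H\<rparr>" by (rule iso_trans[OF _ is_isoI[OF iso_restrict[OF g S G H]]])
  ultimately show ?thesis using iso_semidirect_decomposition[OF g S G dec] by blast
qed

abbreviation D :: "nat \<Rightarrow> (int \<times> bool) monoid" where
  "D n \<equiv> dihedral_group n"

lemma carrier_dihedral_group: "carrier (D n) = {0..<int n} \<times> UNIV"
  by (simp add: dihedral_group_def)

lemma mem_carrier_dihedral_group [simp]: "(i, b) \<in> carrier (D n) \<longleftrightarrow> 0 \<le> i \<and> i < int n"
  by (simp add: dihedral_group_def)

lemma mult_dihedral_group [simp]:
  "(i, b) \<otimes>\<^bsub>D n\<^esub> (j, c) = ((if b then i - j else i + j) mod int n, b \<noteq> c)"
  by (simp add: dihedral_group_def)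

lemma one_dihedral_group [simp]: "\<one>\<^bsub>D n\<^esub> = (0, False)"
  by (simp add: dihedral_group_def)

lemma finite_carrier_dihedral_group [simp]: "finite (carrier (D n))"
  by (simp add: carrier_dihedral_group)

lemma order_dihedral_group: "order (D n) = 2 * n"
  by (simp add: order_def carrier_dihedral_group card_cartesian_product)

lemma group_dihedral_group: assumes "n > 0" shows "group (D n)"
proof (rule groupI)
  show "x \<otimes>\<^bsub>D n\<^esub> y \<in> carrier (D n)" if "x \<in> carrier (D n)" "y \<in> carrier (D n)" for x y
    using that assms by (cases x; cases y) auto
  show "x \<otimes>\<^bsub>D n\<^esub> y \<otimes>\<^bsub>D n\<^esub> z = x \<otimes>\<^bsub>D n\<^esub> (y \<otimes>\<^bsub>D n\<^esub> z)"
    if "x \<in> carrier (D n)" "y \<in> carrier (D n)" "z \<in> carrier (D n)" for x y z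
    by (cases x; cases y; cases z) (auto simp: mod_simps algebra_simps)
  show "\<exists>y\<in>carrier (D n). y \<otimes>\<^bsub>D n\<^esub> x = \<one>\<^bsub>D n\<^esub>" if "x \<in> carrier (D n)" for x
  proof (cases x)
    case (Pair i b)
    show ?thesis
    proof (cases b)
      case True
      then show ?thesis using that Pair by (intro bexI[of _ "(i, True)"]) auto
    next
      case False
      then show ?thesis
        using that Pair assms by (intro bexI[of _ "((- i) mod int n, False)"]) (auto simp: mod_simps)
    qed
  qed
qed (use assms in auto)

lemma inv_dihedral_group:
  assumes "n > 0" "(i, b) \<in> carrier (D n)"
  shows "inv\<^bsub>D n\<^esub> (i, b) = (if b then (i, True) else ((- i) mod int n, False))"
  by (rule group.inv_equality[OF group_dihedral_group[OF assms(1)]]) (use assms in \<open>auto simp: mod_simps\<close>)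

lemma pow_dihedral_group_rotation:
  "(i, False) [^]\<^bsub>D n\<^esub> (k::nat) = ((int k * i) mod int n, False)"
  by (induction k) (auto simp: mod_simps algebra_simps)

lemma dihedral_generators_in_carrier [simp]:
  "n > 0 \<Longrightarrow> dih_a n \<in> carrier (D n)" "n > 0 \<Longrightarrow> dih_x n \<in> carrier (D n)"
  by (simp_all add: dih_a_def dih_x_def)

lemma dihedral_hom_ext:
  assumes "n > 0" "group G" "f \<in> hom (D n) G" "f' \<in> hom (D n) G"
    and "f (dih_a n) = f' (dih_a n)" "f (dih_x n) = f' (dih_x n)" "g \<in> carrier (D n)"
  shows "f g = f' g"
proof -
  obtain i b where g: "g = (i, b)" "0 \<le> i" "i < int n" using assms(7) by (cases g) auto
  have rot: "(i, False) = dih_a n [^]\<^bsub>D n\<^esub> nat i"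
    using g by (simp add: dih_a_def pow_dihedral_group_rotation mod_simps)
  have f_rot: "f (i, False) = f' (i, False)"
    using hom_nat_pow[OF assms(3)] hom_nat_pow[OF assms(4)] group_dihedral_group[OF assms(1)]
      assms(1,2,5) by (simp add: rot)
  show ?thesis
  proof (cases b)
    case True
    then have "g = (i, False) \<otimes>\<^bsub>D n\<^esub> dih_x n" using g by (simp add: dih_x_def)
    then show ?thesis
      using hom_mult[OF assms(3)] hom_mult[OF assms(4)] f_rot assms(1,6) g by simp
  qed (use g f_rot in simp)
qed

definition rotations :: "nat \<Rightarrow> (int \<times> bool) set" where
  "rotations n = {0..<int n} \<times> {False}"

lemma subgroup_rotations: assumes "n > 0" shows "subgroup (rotations n) (D n)"
  by (rule group.subgroupI[OF group_dihedral_group[OF assms]])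
     (use assms in \<open>auto simp: rotations_def carrier_dihedral_group inv_dihedral_group\<close>)

text \<open>For n = m d, the copy of \<open>D\<^sub>2\<^sub>d\<close> in \<open>D\<^sub>2\<^sub>n\<close> generated by a^m and the reflection
  a^j x: (k, b) \<mapsto> a^(mk) (a^j x)^b.\<close>
definition dihedral_embedding :: "nat \<Rightarrow> nat \<Rightarrow> int \<Rightarrow> int \<times> bool \<Rightarrow> int \<times> bool" where
  "dihedral_embedding n m j = (\<lambda>(k, b). ((int m * k + (if b then j else 0)) mod int n, b))"

lemma hom_dihedral_embedding:
  assumes "n = m * d" "m > 0"
  shows "dihedral_embedding n m j \<in> hom (D d) (D n)"
proof (rule homI)
  show "dihedral_embedding n m j x \<in> carrier (D n)" if "x \<in> carrier (D d)" for x
    using that assms by (cases x) (auto simp: dihedral_embedding_def)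
  have scale: "int m * (z mod int d) = (int m * z) mod int n" for z
    unfolding assms(1) of_nat_mult by (rule mult_mod_right)
  fix x y assume "x \<in> carrier (D d)" "y \<in> carrier (D d)"
  show "dihedral_embedding n m j (x \<otimes>\<^bsub>D d\<^esub> y) =
      dihedral_embedding n m j x \<otimes>\<^bsub>D n\<^esub> dihedral_embedding n m j y"
    by (cases x; cases y)
      (simp add: dihedral_embedding_def, simp only: scale mod_simps, simp add: algebra_simps)
qed

lemma inj_on_dihedral_embedding:
  assumes "n = m * d" "m > 0"
  shows "inj_on (dihedral_embedding n m j) (carrier (D d))"
proof (rule inj_onI)
  fix x y assume xy: "x \<in> carrier (D d)" "y \<in> carrier (D d)"
    "dihedral_embedding n m j x = dihedral_embedding n m j y"
  obtain k b l c where x: "x = (k, b)" "y = (l, c)" by (cases x; cases y)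
  have "b = c" using xy(3) x by (simp add: dihedral_embedding_def)
  then have "int n dvd int m * (k - l)"
    using xy(3) x by (simp add: dihedral_embedding_def mod_eq_dvd_iff algebra_simps)
  then have "int d dvd k - l" using assms by simp
  then have "k = l" using xy(1,2) x by (auto intro: int_eq_of_dvd_diff)
  then show "x = y" using x \<open>b = c\<close> by simp
qed

lemma card_image_dihedral_embedding:
  assumes "n = m * d" "m > 0"
  shows "card (dihedral_embedding n m j ` carrier (D d)) = 2 * d"
  using card_image[OF inj_on_dihedral_embedding[OF assms]] order_dihedral_group[of d]
  by (simp add: order_def)

section \<open>Splitting off a cyclic factor\<close>

definition inversion_action :: "nat \<Rightarrow> int \<times> bool \<Rightarrow> int \<Rightarrow> int" where
  "inversion_action m g = (\<lambda>k\<in>carrier (integer_mod_group m). if snd g then (- k) mod int m else k)"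

lemma inversion_action_in_auto:
  assumes "m > 0" shows "inversion_action m g \<in> auto (integer_mod_group m)"
proof (cases "snd g")
  case True
  let ?Z = "integer_mod_group m"
  have Z: "carrier ?Z = {0..<int m}" using assms by (simp add: carrier_integer_mod_group)
  have "inversion_action m g \<in> hom ?Z ?Z"
    by (rule homI) (simp_all add: inversion_action_def True Z assms, simp only: mod_simps, simp)
  moreover have "bij_betw (inversion_action m g) (carrier ?Z) (carrier ?Z)"
    by (rule bij_betw_byWitness[of _ "inversion_action m g"])
      (auto simp: inversion_action_def True Z assms mod_minus_eq)
  ultimately show ?thesis by (simp add: auto_def Bij_def inversion_action_def)
next
  case False
  then show ?thesis
    using group.id_in_auto[OF group_integer_mod_group] by (simp add: inversion_action_def)
qed

lemma hom_inversion_action: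
  assumes "m > 0" "d > 0"
  shows "inversion_action m \<in> hom (D d) (AutoGroup (integer_mod_group m))"
proof (rule homI)
  fix x y assume "x \<in> carrier (D d)" "y \<in> carrier (D d)"
  show "inversion_action m (x \<otimes>\<^bsub>D d\<^esub> y) =
      inversion_action m x \<otimes>\<^bsub>AutoGroup (integer_mod_group m)\<^esub> inversion_action m y"
    unfolding mult_AutoGroup[OF inversion_action_in_auto[OF assms(1)] inversion_action_in_auto[OF assms(1)]]
    by (cases x; cases y; rule ext)
      (auto simp: inversion_action_def compose_def carrier_integer_mod_group assms mod_minus_eq)
qed (simp add: inversion_action_in_auto assms)

lemma inversion_action_generators:
  assumes "m > 0"
  shows "inversion_action m (dih_a d) (1 mod int m) = 1 mod int m"
    and "inversion_action m (dih_x d) (1 mod int m) = (- 1) mod int m"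
  using assms by (simp_all add: inversion_action_def dih_a_def dih_x_def carrier_integer_mod_group mod_minus_eq)

lemma inversion_action_unique:
  assumes "m > 0" "d > 0" and \<phi>: "\<phi> \<in> hom (D d) (AutoGroup (integer_mod_group m))"
    and "\<phi> (dih_a d) (1 mod int m) = 1 mod int m" "\<phi> (dih_x d) (1 mod int m) = (- 1) mod int m"
    and "g \<in> carrier (D d)"
  shows "\<phi> g = inversion_action m g"
proof (rule dihedral_hom_ext[OF assms(2) group.AutoGroup[OF group_integer_mod_group] \<phi>
      hom_inversion_action[OF assms(1,2)] _ _ assms(6)])
  have agree: "\<phi> s = inversion_action m s"
    if s: "s \<in> carrier (D d)" and one: "\<phi> s (1 mod int m) = inversion_action m s (1 mod int m)" for s
  proof (rule auto_eqI)
    show auto: "\<phi> s \<in> auto (integer_mod_group m)" using hom_in_carrier[OF \<phi> s] by simp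
    show auto': "inversion_action m s \<in> auto (integer_mod_group m)"
      by (rule inversion_action_in_auto[OF assms(1)])
    have homs: "\<phi> s \<in> hom (integer_mod_group m) (integer_mod_group m)"
      "inversion_action m s \<in> hom (integer_mod_group m) (integer_mod_group m)"
      using auto auto' by (simp_all add: auto_def)
    show "\<phi> s k = inversion_action m s k" if "k \<in> carrier (integer_mod_group m)" for k
      using integer_mod_group_hom_ext[OF assms(1) group_integer_mod_group homs one that] .
  qed
  show "\<phi> (dih_a d) = inversion_action m (dih_a d)"
    using agree assms(2,4) inversion_action_generators[OF assms(1)] by simp
  show "\<phi> (dih_x d) = inversion_action m (dih_x d)"
    using agree assms(2,5) inversion_action_generators[OF assms(1)] by simp
qed

lemma dihedral_group_iso_semidirect_inversion:
  assumes n: "n = m * d" and "coprime m d" "m > 0" "d > 0"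
  shows "D n \<cong> semidirect_product (integer_mod_group m) (D d) (inversion_action m)"
proof -
  let ?S = "semidirect_product (integer_mod_group m) (D d) (inversion_action m)"
  define F where "F = (\<lambda>(i::int, b::bool). (i mod int m, (i mod int d, b)))"
  have mod_m: "i mod int n mod int m = i mod int m" and mod_d: "i mod int n mod int d = i mod int d" for i
    by (simp_all add: n mod_mod_cancel)
  have "F \<in> hom (D n) ?S"
  proof (rule homI)
    show "F x \<in> carrier ?S" if "x \<in> carrier (D n)" for x
      using assms(3,4) by (cases x) (simp add: F_def carrier_integer_mod_group)
    fix x y assume "x \<in> carrier (D n)" "y \<in> carrier (D n)"
    show "F (x \<otimes>\<^bsub>D n\<^esub> y) = F x \<otimes>\<^bsub>?S\<^esub> F y"
      using assms(3,4)
      by (cases x; cases y)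
        (simp add: F_def inversion_action_def carrier_integer_mod_group mod_m mod_d, simp only: mod_simps, simp)
  qed
  moreover have "inj_on F (carrier (D n))"
    by (rule inj_onI, clarsimp simp: F_def, rule eq_of_mod_eq_coprime[OF assms(2)]) (auto simp: n)
  ultimately have "F \<in> iso (D n) ?S"
    using assms(3,4) by (intro iso_of_inj_card)
      (simp_all add: carrier_integer_mod_group card_cartesian_product order_dihedral_group[unfolded order_def] n)
  then show ?thesis by (rule is_isoI)
qed

lemma dihedral_group_iso_semidirect_cyclic:
  assumes "n > 0" "m > 0" "m dvd n" "coprime m (n div m)"
    and "\<phi> \<in> hom (D (n div m)) (AutoGroup (integer_mod_group m))"
    and "\<phi> (dih_a (n div m)) (1 mod int m) = 1 mod int m"
    and "\<phi> (dih_x (n div m)) (1 mod int m) = (- 1) mod int m"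
  shows "D n \<cong> semidirect_product (integer_mod_group m) (D (n div m)) \<phi>"
proof -
  have d: "n div m > 0" using assms(1-3) by (auto elim: dvdE)
  have "D n \<cong> semidirect_product (integer_mod_group m) (D (n div m)) (inversion_action m)"
    using dihedral_group_iso_semidirect_inversion[OF _ assms(4,2) d] assms(3) by simp
  also have "\<dots> \<cong> semidirect_product (integer_mod_group m) (D (n div m)) \<phi>"
    using inversion_action_unique[OF assms(2) d assms(5-7)] by (intro semidirect_product_cong) simp
  finally show ?thesis .
qed

lemma dihedral_group_iso_DirProd:
  assumes n: "n = 2 * k" and "odd k"
  shows "D n \<cong> D k \<times>\<times> integer_mod_group 2"
proof -
  define F where "F = (\<lambda>(i::int, b::bool). ((i mod int k, b), i mod 2))"
  have k: "k > 0" using assms(2) by (rule odd_pos)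
  have mod_k: "i mod int n mod int k = i mod int k" and mod_2: "i mod int n mod 2 = i mod 2" for i
    by (simp_all add: n mod_mod_cancel)
  have "F \<in> hom (D n) (D k \<times>\<times> integer_mod_group 2)"
  proof (rule homI)
    show "F x \<in> carrier (D k \<times>\<times> integer_mod_group 2)" if "x \<in> carrier (D n)" for x
      using k by (cases x) (simp add: F_def carrier_integer_mod_group)
    fix x y assume "x \<in> carrier (D n)" "y \<in> carrier (D n)"
    have "(i - j) mod 2 = (i + j) mod 2" for i j :: int by presburger
    then show "F (x \<otimes>\<^bsub>D n\<^esub> y) = F x \<otimes>\<^bsub>D k \<times>\<times> integer_mod_group 2\<^esub> F y"
      by (cases x; cases y) (simp add: F_def mod_k mod_2, simp only: mod_simps, simp)
  qed
  moreover have "inj_on F (carrier (D n))"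
    by (rule inj_onI, clarsimp simp: F_def, rule eq_of_mod_eq_coprime[of 2 k]) (use assms in auto)
  ultimately have "F \<in> iso (D n) (D k \<times>\<times> integer_mod_group 2)"
    by (intro iso_of_inj_card)
      (simp_all add: carrier_integer_mod_group card_cartesian_product order_dihedral_group[unfolded order_def] n)
  then show ?thesis by (rule is_isoI)
qed

section \<open>Splitting off a factor of order two\<close>

text \<open>The automorphism a \<mapsto> a\<inverse>, x \<mapsto> a x, i.e. a^i x^b \<mapsto> a^(b - i) x^b.\<close>
definition dihedral_twist :: "nat \<Rightarrow> int \<times> bool \<Rightarrow> int \<times> bool" where
  "dihedral_twist k = restrict (\<lambda>(i, b). ((if b then 1 - i else - i) mod int k, b)) (carrier (D k))"

lemma dihedral_twist_closed: "k > 0 \<Longrightarrow> x \<in> carrier (D k) \<Longrightarrow> dihedral_twist k x \<in> carrier (D k)"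
  by (cases x) (simp add: dihedral_twist_def)

lemma dihedral_twist_twist: "k > 0 \<Longrightarrow> x \<in> carrier (D k) \<Longrightarrow> dihedral_twist k (dihedral_twist k x) = x"
  by (cases x) (auto simp: dihedral_twist_def mod_diff_right_eq mod_minus_eq)

lemma dihedral_twist_in_auto:
  assumes "k > 0" shows "dihedral_twist k \<in> auto (D k)"
proof -
  have "dihedral_twist k \<in> hom (D k) (D k)"
  proof (rule homI)
    fix x y assume "x \<in> carrier (D k)" "y \<in> carrier (D k)"
    then show "dihedral_twist k (x \<otimes>\<^bsub>D k\<^esub> y) = dihedral_twist k x \<otimes>\<^bsub>D k\<^esub> dihedral_twist k y"
      using assms by (cases x; cases y)
        (simp add: dihedral_twist_def, simp only: mod_simps, simp add: algebra_simps)
  qed (rule dihedral_twist_closed[OF assms])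
  moreover have "bij_betw (dihedral_twist k) (carrier (D k)) (carrier (D k))"
    by (rule bij_betw_byWitness[of _ "dihedral_twist k"])
      (auto simp: dihedral_twist_twist dihedral_twist_closed assms)
  ultimately show ?thesis by (simp add: auto_def Bij_def dihedral_twist_def)
qed

definition twist_action :: "nat \<Rightarrow> int \<Rightarrow> int \<times> bool \<Rightarrow> int \<times> bool" where
  "twist_action k e = (if e = 1 then dihedral_twist k else (\<lambda>x\<in>carrier (D k). x))"

lemma twist_action_in_auto: "k > 0 \<Longrightarrow> twist_action k e \<in> auto (D k)"
  using dihedral_twist_in_auto group.id_in_auto[OF group_dihedral_group] by (simp add: twist_action_def)

lemma hom_twist_action:
  assumes "k > 0" shows "twist_action k \<in> hom (integer_mod_group 2) (AutoGroup (D k))"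
proof (rule homI)
  fix e f assume "e \<in> carrier (integer_mod_group 2)" "f \<in> carrier (integer_mod_group 2)"
  then have "e \<in> {0, 1}" "f \<in> {0, 1}" by (auto simp: carrier_integer_mod_group)
  moreover have "dihedral_twist k x = undefined" if "x \<notin> carrier (D k)" for x
    using that by (simp add: dihedral_twist_def)
  ultimately show "twist_action k (e \<otimes>\<^bsub>integer_mod_group 2\<^esub> f) =
      twist_action k e \<otimes>\<^bsub>AutoGroup (D k)\<^esub> twist_action k f"
    unfolding mult_AutoGroup[OF twist_action_in_auto[OF assms] twist_action_in_auto[OF assms]]
    by (auto simp: twist_action_def compose_def dihedral_twist_twist dihedral_twist_closed assms)
qed (simp add: twist_action_in_auto assms)

lemma twist_action_generators:
  assumes "k > 0"
  shows "twist_action k 1 (dih_a k) = inv\<^bsub>D k\<^esub> (dih_a k)"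
    and "twist_action k 1 (dih_x k) = dih_a k \<otimes>\<^bsub>D k\<^esub> dih_x k"
  using assms by (simp_all add: twist_action_def dihedral_twist_def dih_a_def dih_x_def inv_dihedral_group
      mod_minus_eq)

lemma twist_action_unique:
  assumes "k > 0" and \<psi>: "\<psi> \<in> hom (integer_mod_group 2) (AutoGroup (D k))"
    and "\<psi> 1 (dih_a k) = inv\<^bsub>D k\<^esub> (dih_a k)" "\<psi> 1 (dih_x k) = dih_a k \<otimes>\<^bsub>D k\<^esub> dih_x k"
    and "e \<in> carrier (integer_mod_group 2)" "x \<in> carrier (D k)"
  shows "\<psi> e x = twist_action k e x"
proof -
  have "e = 0 \<or> e = 1" using assms(5) by (auto simp: carrier_integer_mod_group)
  then show ?thesis
  proof
    assume "e = 0"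
    then show ?thesis
      using hom_one[OF \<psi> group_integer_mod_group group.AutoGroup[OF group_dihedral_group[OF assms(1)]]]
        assms(6) by (simp add: twist_action_def)
  next
    assume e: "e = 1"
    have "\<psi> 1 \<in> auto (D k)" using hom_in_carrier[OF \<psi>] by simp
    then have "\<psi> 1 \<in> hom (D k) (D k)" by (simp add: auto_def)
    moreover have "twist_action k 1 \<in> hom (D k) (D k)"
      using twist_action_in_auto[OF assms(1)] by (simp add: auto_def)
    ultimately show ?thesis
      using dihedral_hom_ext[OF assms(1) group_dihedral_group[OF assms(1)] _ _ _ _ assms(6)]
        twist_action_generators[OF assms(1)] assms(3,4) e by simp
  qed
qed

text \<open>(a^i x^b, e) \<mapsto> a^(2i) x^b (a x)^e\<close>
definition twist_product_map :: "nat \<Rightarrow> (int \<times> bool) \<times> int \<Rightarrow> int \<times> bool" where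
  "twist_product_map n = (\<lambda>((i, b), e).
     ((2 * i + (if e = 1 then (if b then -1 else 1) else 0)) mod int n, b \<noteq> (e = 1)))"

lemma hom_twist_product_map:
  assumes n: "n = 2 * k" and k: "k > 0"
  shows "twist_product_map n \<in> hom (semidirect_product (D k) (integer_mod_group 2) (twist_action k)) (D n)"
proof (rule homI)
  let ?S = "semidirect_product (D k) (integer_mod_group 2) (twist_action k)"
  show "twist_product_map n x \<in> carrier (D n)" if "x \<in> carrier ?S" for x
    using that n k by (auto simp: twist_product_map_def)
  have double: "2 * (z mod int k) = (2 * z) mod int n" for z
    unfolding n of_nat_mult of_nat_numeral by (rule mult_mod_right)
  fix x y assume xy: "x \<in> carrier ?S" "y \<in> carrier ?S"
  obtain i b e j c f where x: "x = ((i, b), e)" and y: "y = ((j, c), f)"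
    by (cases x; cases y) auto
  have j: "0 \<le> j" "j < int k" and ef: "e = 0 \<or> e = 1" "f = 0 \<or> f = 1"
    using xy by (auto simp: x y carrier_integer_mod_group)
  have tw: "twist_action k e' (j, c') =
      (if e' = 1 then ((if c' then 1 - j else - j) mod int k, c') else (j, c'))" for e' c'
    using j by (simp add: twist_action_def dihedral_twist_def)
  show "twist_product_map n (x \<otimes>\<^bsub>?S\<^esub> y) = twist_product_map n x \<otimes>\<^bsub>D n\<^esub> twist_product_map n y"
    using ef unfolding x y
    by (elim disjE; cases b; cases c)
      (simp_all add: tw twist_product_map_def split del: if_split,
        simp_all only: double mod_simps, simp_all add: algebra_simps)
qed

lemma inj_on_twist_product_map:
  assumes n: "n = 2 * k"
  shows "inj_on (twist_product_map n) (carrier (semidirect_product (D k) (integer_mod_group 2) \<psi>))"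
proof (rule inj_onI)
  fix x y assume xy: "x \<in> carrier (semidirect_product (D k) (integer_mod_group 2) \<psi>)"
    "y \<in> carrier (semidirect_product (D k) (integer_mod_group 2) \<psi>)"
    and eq: "twist_product_map n x = twist_product_map n y"
  obtain i b e j c f where x: "x = ((i, b), e)" and y: "y = ((j, c), f)"
    by (cases x; cases y) auto
  have ij: "0 \<le> i" "i < int k" "0 \<le> j" "j < int k" and ef: "e = 0 \<or> e = 1" "f = 0 \<or> f = 1"
    using xy by (auto simp: x y carrier_integer_mod_group)
  have parity: "fst (twist_product_map n ((i', b'), e')) mod 2 = e'" if "e' = 0 \<or> e' = 1" for i' b' e'
    using that by (auto simp: twist_product_map_def n mod_mod_cancel)
  have "e = f" using parity[OF ef(1), of i b] parity[OF ef(2), of j c] eq by (simp add: x y)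
  moreover have "b = c" using eq \<open>e = f\<close> by (auto simp: x y twist_product_map_def)
  ultimately have "2 * int k dvd 2 * (i - j)"
    using eq by (simp add: x y twist_product_map_def n mod_eq_dvd_iff right_diff_distrib)
  then have "int k dvd i - j" by (metis dvd_mult_cancel_left zero_neq_numeral)
  then have "i = j" using ij by (rule int_eq_of_dvd_diff)
  then show "x = y" using x y \<open>e = f\<close> \<open>b = c\<close> by simp
qed

lemma semidirect_twist_iso_dihedral_group:
  assumes n: "n = 2 * k" and k: "k > 0"
  shows "semidirect_product (D k) (integer_mod_group 2) (twist_action k) \<cong> D n"
proof -
  have "twist_product_map n \<in> iso (semidirect_product (D k) (integer_mod_group 2) (twist_action k)) (D n)"
    using hom_twist_product_map[OF n k] inj_on_twist_product_map[OF n]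
    by (rule iso_of_inj_card) (simp_all add: carrier_integer_mod_group card_cartesian_product
        order_dihedral_group[unfolded order_def] n)
  then show ?thesis by (rule is_isoI)
qed

lemma dihedral_group_iso_semidirect_dihedral:
  assumes "n > 0" "even n"
    and "\<psi> \<in> hom (integer_mod_group 2) (AutoGroup (D (n div 2)))"
    and "\<psi> 1 (dih_a (n div 2)) = inv\<^bsub>D (n div 2)\<^esub> (dih_a (n div 2))"
    and "\<psi> 1 (dih_x (n div 2)) = dih_a (n div 2) \<otimes>\<^bsub>D (n div 2)\<^esub> dih_x (n div 2)"
  shows "D n \<cong> semidirect_product (D (n div 2)) (integer_mod_group 2) \<psi>"
proof -
  have k: "n div 2 > 0" using assms(1,2) by (auto elim: evenE)
  have "D n \<cong> semidirect_product (D (n div 2)) (integer_mod_group 2) (twist_action (n div 2))"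
    using semidirect_twist_iso_dihedral_group[OF _ k] assms(2)
      group_semidirect_product[OF group_dihedral_group[OF k] group_integer_mod_group hom_twist_action[OF k]]
    by (simp add: group.iso_sym)
  also have "\<dots> \<cong> semidirect_product (D (n div 2)) (integer_mod_group 2) \<psi>"
    using twist_action_unique[OF k assms(3-5)] by (intro semidirect_product_cong) simp
  finally show ?thesis .
qed

section \<open>Subgroups of rotations\<close>

lemma card_rotation_subgroup_dvd:
  assumes n: "n > 0" and S: "subgroup S (D n)" "S \<subseteq> rotations n"
  shows "card S dvd n"
proof -
  let ?R = "D n\<lparr>carrier := rotations n\<rparr>"
  have G: "group (D n)" by (rule group_dihedral_group[OF n])
  have "card (rcosets\<^bsub>?R\<^esub> S) * card S = order ?R"
    by (rule group.lagrange[OF subgroup.subgroup_is_group[OF subgroup_rotations[OF n] G]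
          group.subgroup_incl[OF G S(1) subgroup_rotations[OF n] S(2)]])
  moreover have "order ?R = n" by (simp add: order_def rotations_def)
  ultimately show ?thesis by (metis dvd_triv_right)
qed

lemma rotation_subgroup_eq:
  assumes n: "n > 0" and S: "subgroup S (D n)" "S \<subseteq> rotations n" and nd: "n = card S * d"
  shows "S = (\<lambda>t. (int d * t, False)) ` {0..<int (card S)}"
proof -
  have G: "group (D n)" by (rule group_dihedral_group[OF n])
  have d: "d > 0" using n nd by (cases d) auto
  have "S \<subseteq> (\<lambda>t. (int d * t, False)) ` {0..<int (card S)}"
  proof
    fix x assume x: "x \<in> S"
    then obtain i where i: "x = (i, False)" "0 \<le> i" "i < int n" using S(2) by (auto simp: rotations_def)
    have "x [^]\<^bsub>D n\<lparr>carrier := S\<rparr>\<^esub> card S = \<one>\<^bsub>D n\<lparr>carrier := S\<rparr>\<^esub>"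
      using group.pow_order_eq_1[OF subgroup.subgroup_is_group[OF S(1) G]] x by (simp add: order_def)
    then have "(int (card S) * i) mod int n = 0"
      using monoid.nat_pow_consistent[OF group.is_monoid[OF G], of x "card S" S] i
      by (simp add: pow_dihedral_group_rotation)
    then have "int d dvd i" using n by (simp add: nd mod_eq_0_iff_dvd)
    then obtain t where "i = int d * t" by (auto elim: dvdE)
    moreover have "0 \<le> t" "t < int (card S)"
      using i d \<open>i = int d * t\<close> nd by (simp_all add: zero_le_mult_iff mult.commute)
    ultimately show "x \<in> (\<lambda>t. (int d * t, False)) ` {0..<int (card S)}" using i by auto
  qed
  moreover have "card ((\<lambda>t. (int d * t, False)) ` {0..<int (card S)}) = card S"
    using d by (subst card_image) (auto simp: inj_on_def)
  ultimately show ?thesis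
    using card_subset_eq[of _ S] by (metis finite_atLeastLessThan_int finite_imageI)
qed

lemma rotation_subgroup_contains:
  assumes n: "n > 0" and S: "subgroup S (D n)" "S \<subseteq> rotations n" and q: "q dvd card S" "q > 1"
  shows "(int (n div q), False) \<in> S"
proof -
  obtain d where nd: "n = card S * d" using card_rotation_subgroup_dvd[OF n S] by (auto elim: dvdE)
  obtain r where r: "card S = q * r" using q(1) by (auto elim: dvdE)
  have "r > 0" using r n nd by (cases r) auto
  then have "r < card S" using r q(2) n_less_m_mult_n by simp
  moreover have "n div q = d * r" using nd r q(2) by simp
  ultimately show ?thesis
    by (subst rotation_subgroup_eq[OF n S nd]) (auto intro!: image_eqI[of _ _ "int r"])
qed

lemma coprime_card_rotation_subgroups:
  assumes n: "n > 0" and A: "subgroup A (D n)" "A \<subseteq> rotations n"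
    and B: "subgroup B (D n)" "B \<subseteq> rotations n" and AB: "A \<inter> B = {(0, False)}"
  shows "coprime (card A) (card B)"
proof (rule ccontr)
  assume "\<not> coprime (card A) (card B)"
  then obtain p where p: "Factorial_Ring.prime p" "p dvd card A" "p dvd card B"
    using prime_factor_nat[of "gcd (card A) (card B)"] by (auto simp: coprime_iff_gcd_eq_1)
  have "(int (n div p), False) \<in> A \<inter> B"
    using rotation_subgroup_contains[OF n A p(2)] rotation_subgroup_contains[OF n B p(3)]
      prime_gt_1_nat[OF p(1)] by simp
  moreover have "p dvd n" using p(2) card_rotation_subgroup_dvd[OF n A] by (rule dvd_trans)
  then have "n div p > 0" using n prime_gt_0_nat[OF p(1)] by (auto elim: dvdE)
  ultimately show False using AB by auto
qed

lemma card_subgroup_le_rotations: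
  assumes n: "n > 0" and H: "subgroup H (D n)"
  shows "card H \<le> 2 * card (H \<inter> rotations n)"
proof (cases "H \<subseteq> rotations n")
  case True
  then show ?thesis by (simp add: Int_absorb2)
next
  case False
  then obtain j where h: "(j, True) \<in> H" using subgroup.subset[OF H] by (auto simp: rotations_def)
  have fin: "finite H" using finite_subset[OF subgroup.subset[OF H]] by simp
  \<comment> \<open>Left multiplication by a reflection of H maps the reflections of H into its rotations.\<close>
  have "inj_on (\<lambda>y. (j, True) \<otimes>\<^bsub>D n\<^esub> y) (H - rotations n)"
  proof (rule inj_onI)
    fix y y' assume yy: "y \<in> H - rotations n" "y' \<in> H - rotations n"
      "(j, True) \<otimes>\<^bsub>D n\<^esub> y = (j, True) \<otimes>\<^bsub>D n\<^esub> y'"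
    have "y \<in> carrier (D n)" "y' \<in> carrier (D n)" using yy(1,2) subgroup.mem_carrier[OF H] by auto
    then obtain i i' where "y = (i, True)" "y' = (i', True)" "0 \<le> i" "i < int n" "0 \<le> i'" "i' < int n"
      using yy(1,2) by (cases y; cases y') (auto simp: rotations_def)
    moreover have "int n dvd i' - i" using yy(3) calculation by (simp add: mod_eq_dvd_iff)
    ultimately show "y = y'" using int_eq_of_dvd_diff[of n i' i] by simp
  qed
  moreover have "(\<lambda>y. (j, True) \<otimes>\<^bsub>D n\<^esub> y) ` (H - rotations n) \<subseteq> H \<inter> rotations n"
  proof (rule image_subsetI)
    fix y assume "y \<in> H - rotations n"
    then have y: "y \<in> H" "y \<notin> rotations n" by auto
    then obtain i where "y = (i, True)" using subgroup.subset[OF H] by (cases y) (auto simp: rotations_def)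
    then show "(j, True) \<otimes>\<^bsub>D n\<^esub> y \<in> H \<inter> rotations n"
      using subgroup.m_closed[OF H h y(1)] n by (simp add: rotations_def)
  qed
  ultimately have "card (H - rotations n) \<le> card (H \<inter> rotations n)"
    using card_inj_on_le fin by blast
  moreover have "card H = card (H \<inter> rotations n) + card (H - rotations n)"
    using fin by (metis card_Int_Diff)
  ultimately show ?thesis by simp
qed

lemma iso_rotation_subgroup:
  assumes n: "n = m * d" and m: "m > 0" and d: "d > 0"
  shows "D n\<lparr>carrier := (\<lambda>t. (int d * t, False)) ` {0..<int m}\<rparr> \<cong> integer_mod_group m"
proof -
  interpret Dn: group "D n" using group_dihedral_group m d n by simp
  have g: "(int d mod int n, False) \<in> carrier (D n)" "(int d mod int n, False) [^]\<^bsub>D n\<^esub> m = \<one>\<^bsub>D n\<^esub>"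
    using m d n by (simp_all add: pow_dihedral_group_rotation mod_simps mult.commute)
  have pow: "(int d mod int n, False) [^]\<^bsub>D n\<^esub> nat t = (int d * t, False)" if "t \<in> {0..<int m}" for t
  proof -
    have "int d * t < int n" using that d n by (simp add: mult.commute)
    then show ?thesis using that by (simp add: pow_dihedral_group_rotation mod_simps mult.commute)
  qed
  have Zm: "carrier (integer_mod_group m) = {0..<int m}" using m by (simp add: carrier_integer_mod_group)
  have "inj_on (\<lambda>t. (int d * t, False)) {0..<int m}"
    using d by (simp add: inj_on_def)
  then have "inj_on (\<lambda>t. (int d mod int n, False) [^]\<^bsub>D n\<^esub> nat t) (carrier (integer_mod_group m))"
    unfolding Zm using inj_on_cong[of "{0..<int m}", OF pow] by simp
  moreover have "(\<lambda>t. (int d mod int n, False) [^]\<^bsub>D n\<^esub> nat t) ` carrier (integer_mod_group m) =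
      (\<lambda>t. (int d * t, False)) ` {0..<int m}"
    unfolding Zm by (rule image_cong[OF refl pow])
  ultimately have "integer_mod_group m \<cong> D n\<lparr>carrier := (\<lambda>t. (int d * t, False)) ` {0..<int m}\<rparr>"
    by (rule is_iso_image[OF Dn.pow_hom_integer_mod_group[OF m g]])
  then show ?thesis by (rule group.iso_sym[OF group_integer_mod_group])
qed

lemma iso_dihedral_subgroup:
  assumes n: "n = m * d" and m: "m > 0" and H: "subgroup H (D n)" "card H \<le> 2 * d"
    and rot: "(\<lambda>t. (int m * t, False)) ` {0..<int d} \<subseteq> H" and refl: "(j, True) \<in> H"
  shows "D n\<lparr>carrier := H\<rparr> \<cong> D d"
proof -
  have sub: "dihedral_embedding n m j ` carrier (D d) \<subseteq> H"
  proof (rule image_subsetI)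
    fix x assume "x \<in> carrier (D d)"
    then obtain t b where x: "x = (t, b)" "0 \<le> t" "t < int d" by (cases x) auto
    then have "int m * t < int n" using m n by simp
    then have "dihedral_embedding n m j x =
        (if b then (int m * t, False) \<otimes>\<^bsub>D n\<^esub> (j, True) else (int m * t, False))"
      using x by (simp add: dihedral_embedding_def)
    moreover have rot_t: "(int m * t, False) \<in> H" using x by (intro subsetD[OF rot]) auto
    ultimately show "dihedral_embedding n m j x \<in> H"
      using subgroup.m_closed[OF H(1) rot_t refl] by simp
  qed
  have "card H \<le> card (dihedral_embedding n m j ` carrier (D d))"
    using H(2) card_image_dihedral_embedding[OF n m] by simp
  then have "dihedral_embedding n m j ` carrier (D d) = H"
    using card_seteq[OF finite_subset[OF subgroup.subset[OF H(1)]] sub] by simp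
  then have "D d \<cong> D n\<lparr>carrier := H\<rparr>"
    by (rule is_iso_image[OF hom_dihedral_embedding[OF n m] inj_on_dihedral_embedding[OF n m]])
  moreover have "d > 0" using subgroup.mem_carrier[OF H(1) refl] n by (cases d) auto
  ultimately show ?thesis using group.iso_sym group_dihedral_group by blast
qed

section \<open>Semidirect decompositions of the dihedral group\<close>

lemma rotations_of_complement:
  assumes n: "n > 0" and N: "subgroup N (D n)" "N \<subseteq> rotations n" and H: "subgroup H (D n)"
    and NH: "N \<inter> H = {(0, False)}" and card: "card N * card H = 2 * n"
  shows "card (H \<inter> rotations n) = n div card N" and "coprime (card N) (n div card N)"
proof -
  have G: "group (D n)" by (rule group_dihedral_group[OF n])
  define d where "d = n div card N"
  have nd: "n = card N * d" using card_rotation_subgroup_dvd[OF n N] by (simp add: d_def)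
  have "card N > 0" "d > 0" using n nd by auto
  define E where "E = H \<inter> rotations n"
  have E: "subgroup E (D n)" "E \<subseteq> rotations n"
    unfolding E_def by (simp_all add: group.subgroups_Inter_pair[OF G H subgroup_rotations[OF n]])
  have "N \<inter> E = {(0, False)}"
    using NH subgroup.one_closed[OF N(1)] subgroup.one_closed[OF E(1)] by (auto simp: E_def)
  then have cop: "coprime (card N) (card E)" by (rule coprime_card_rotation_subgroups[OF n N E])
  moreover have "card E dvd card N * d" using card_rotation_subgroup_dvd[OF n E] nd by simp
  ultimately have "card E dvd d" by (simp add: coprime_commute coprime_dvd_mult_right_iff)
  moreover have "2 * d \<le> 2 * card E"
    using card_subgroup_le_rotations[OF n H] card nd \<open>card N > 0\<close> by (simp add: E_def)
  ultimately have "card E = d" using \<open>d > 0\<close> by (simp add: dvd_imp_le le_antisym)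
  then show "card (H \<inter> rotations n) = n div card N" "coprime (card N) (n div card N)"
    using cop by (simp_all add: E_def d_def)
qed

lemma semidirect_decomposition_rotation_kernel:
  assumes n: "n > 0" and dec: "semidirect_decomposition (D n) N H"
    and N: "card N > 1" "N \<subseteq> rotations n"
  shows "\<exists>m. m dvd n \<and> coprime m (n div m) \<and>
    D n\<lparr>carrier := N\<rparr> \<cong> integer_mod_group m \<and> D n\<lparr>carrier := H\<rparr> \<cong> D (n div m)"
proof -
  have G: "group (D n)" by (rule group_dihedral_group[OF n])
  have NG: "subgroup N (D n)" and H: "subgroup H (D n)" and NH: "N \<inter> H = {(0, False)}"
    and card: "card N * card H = 2 * n"
    using dec by (simp_all add: semidirect_decomposition_def normal_imp_subgroup order_dihedral_group)
  define m d where "m = card N" and "d = n div card N"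
  have nmd: "n = m * d" using card_rotation_subgroup_dvd[OF n NG N(2)] by (simp add: m_def d_def)
  have m: "m > 0" and d: "d > 0" using N(1) n nmd by (auto simp: m_def)
  define E where "E = H \<inter> rotations n"
  have E: "subgroup E (D n)" "E \<subseteq> rotations n"
    unfolding E_def by (simp_all add: group.subgroups_Inter_pair[OF G H subgroup_rotations[OF n]])
  have Ed: "card E = d" and "coprime m d"
    using rotations_of_complement[OF n NG N(2) H NH card] by (simp_all add: E_def d_def m_def)
  have "card H = 2 * d" using card nmd m by (simp add: m_def)
  have "E = (\<lambda>t. (int m * t, False)) ` {0..<int d}"
    using rotation_subgroup_eq[OF n E, of m] Ed nmd by (simp add: ac_simps)
  then have rot: "(\<lambda>t. (int m * t, False)) ` {0..<int d} \<subseteq> H" unfolding E_def by blast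
  obtain j where "(j, True) \<in> H"
  proof -
    have "E \<noteq> H" using \<open>card H = 2 * d\<close> Ed d by auto
    then show ?thesis using that subgroup.subset[OF H] by (auto simp: E_def rotations_def)
  qed
  then have "D n\<lparr>carrier := H\<rparr> \<cong> D d"
    using iso_dihedral_subgroup[OF nmd m H _ rot] \<open>card H = 2 * d\<close> by simp
  moreover have "D n\<lparr>carrier := N\<rparr> \<cong> integer_mod_group m"
    using iso_rotation_subgroup[OF nmd m d] rotation_subgroup_eq[OF n NG N(2), of d] nmd
    by (simp add: m_def)
  moreover have "n div m = d" using nmd m by simp
  ultimately show ?thesis using \<open>coprime m d\<close> nmd by (intro exI[of _ m]) simp
qed

lemma normal_subgroup_even_rotations:
  assumes n: "n > 0" and N: "N \<lhd> D n" and refl: "(j, True) \<in> N"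
  shows "((2 * t) mod int n, False) \<in> N"
proof -
  \<comment> \<open>conjugating the reflection by a^(-t) and multiplying by it again gives a^(2t)\<close>
  let ?g = "((- t) mod int n, False)"
  have g: "?g \<in> carrier (D n)" using n by simp
  have "(j, True) \<otimes>\<^bsub>D n\<^esub> (?g \<otimes>\<^bsub>D n\<^esub> (j, True) \<otimes>\<^bsub>D n\<^esub> inv\<^bsub>D n\<^esub> ?g) \<in> N"
    by (rule subgroup.m_closed[OF normal_imp_subgroup[OF N] refl normal.inv_op_closed2[OF N g refl]])
  moreover have "(j, True) \<otimes>\<^bsub>D n\<^esub> (?g \<otimes>\<^bsub>D n\<^esub> (j, True) \<otimes>\<^bsub>D n\<^esub> inv\<^bsub>D n\<^esub> ?g) =
      ((2 * t) mod int n, False)"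
    using g n by (simp add: inv_dihedral_group, simp only: mod_simps, simp)
  ultimately show ?thesis by simp
qed

lemma normal_subgroup_odd_eq_carrier:
  assumes n: "odd n" and N: "N \<lhd> D n" and refl: "(j, True) \<in> N"
  shows "N = carrier (D n)"
proof
  show "N \<subseteq> carrier (D n)" using N by (simp add: normal_def subgroup.subset)
  have "n > 0" using n by (rule odd_pos)
  have rot: "(s, False) \<in> N" if "0 \<le> s" "s < int n" for s
  proof -
    \<comment> \<open>(n + 1)/2 inverts 2 modulo n\<close>
    have "(2 * (s * ((int n + 1) div 2))) mod int n = (s + s * int n) mod int n"
      using n by (simp add: algebra_simps)
    also have "\<dots> = s" using that by simp
    finally show ?thesis using normal_subgroup_even_rotations[OF \<open>n > 0\<close> N refl] by metis
  qed
  show "carrier (D n) \<subseteq> N"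
  proof
    fix x assume "x \<in> carrier (D n)"
    then obtain r b where x: "x = (r, b)" "0 \<le> r" "r < int n" by (cases x) auto
    show "x \<in> N"
    proof (cases b)
      case True
      have "(j, True) \<otimes>\<^bsub>D n\<^esub> ((j - r) mod int n, False) = x"
        using x True by (simp add: mod_diff_right_eq)
      then show ?thesis
        using subgroup.m_closed[OF normal_imp_subgroup[OF N] refl rot] \<open>n > 0\<close> by auto
    qed (use x rot in simp)
  qed
qed

lemma semidirect_decomposition_reflection_kernel:
  assumes n: "n > 0" and dec: "semidirect_decomposition (D n) N H"
    and H: "card H > 1" and N: "\<not> N \<subseteq> rotations n"
  shows "even n \<and> D n\<lparr>carrier := N\<rparr> \<cong> D (n div 2) \<and> D n\<lparr>carrier := H\<rparr> \<cong> integer_mod_group 2"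
proof -
  have NG: "N \<lhd> D n" and HG: "subgroup H (D n)" and card: "card N * card H = 2 * n"
    using dec by (simp_all add: semidirect_decomposition_def order_dihedral_group)
  obtain j where refl: "(j, True) \<in> N"
    using N subgroup.subset[OF normal_imp_subgroup[OF NG]] by (auto simp: rotations_def)
  have "card N \<le> n"
  proof -
    have "card N * 2 \<le> card N * card H" using H by simp
    then show ?thesis using card by simp
  qed
  moreover have "card N = 2 * n" if "odd n"
    using normal_subgroup_odd_eq_carrier[OF that NG refl] order_dihedral_group[of n]
    by (simp add: order_def)
  ultimately have "even n" using n by auto
  then obtain k where k: "n = 2 * k" by (auto elim: evenE)
  have "(\<lambda>t. (2 * t, False)) ` {0..<int k} \<subseteq> N"
  proof (rule image_subsetI)
    fix t assume "t \<in> {0..<int k}"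
    then have "(2 * t) mod int n = 2 * t" using k by simp
    then show "(2 * t, False) \<in> N" using normal_subgroup_even_rotations[OF n NG refl, of t] by simp
  qed
  then have ND: "D n\<lparr>carrier := N\<rparr> \<cong> D k"
    using iso_dihedral_subgroup[OF k _ normal_imp_subgroup[OF NG]] \<open>card N \<le> n\<close> refl k by simp
  then have "card N = n" using iso_same_card[OF ND] order_dihedral_group[of k] k by (simp add: order_def)
  then have "card H = 2" using card n by simp
  then have "D n\<lparr>carrier := H\<rparr> \<cong> integer_mod_group 2"
    by (rule group.iso_integer_mod_group_two[OF group_dihedral_group[OF n] HG])
  then show ?thesis using \<open>even n\<close> ND k by simp
qed

lemma dihedral_group_semidirect_factors:
  fixes K :: "'a monoid" and Q :: "'b monoid"
  assumes n: "n > 0" and K: "group K" and Q: "group Q" and \<phi>: "\<phi> \<in> hom Q (AutoGroup K)"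
    and KQ: "order K > 1" "order Q > 1" and iso: "D n \<cong> semidirect_product K Q \<phi>"
  shows "(\<exists>m. m dvd n \<and> coprime m (n div m) \<and> K \<cong> integer_mod_group m \<and> Q \<cong> D (n div m))
    \<or> (2 dvd n \<and> K \<cong> D (n div 2) \<and> Q \<cong> integer_mod_group 2)"
proof -
  obtain N H where dec: "semidirect_decomposition (D n) N H"
    and KN: "K \<cong> D n\<lparr>carrier := N\<rparr>" and QH: "Q \<cong> D n\<lparr>carrier := H\<rparr>"
    using semidirect_decomposition_of_iso[OF group_dihedral_group[OF n] K Q \<phi> iso] by blast
  have "card N > 1" "card H > 1"
    using iso_same_card[OF KN] iso_same_card[OF QH] KQ by (simp_all add: order_def)
  show ?thesis
  proof (cases "N \<subseteq> rotations n")
    case True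
    then obtain m where "m dvd n" "coprime m (n div m)"
      "D n\<lparr>carrier := N\<rparr> \<cong> integer_mod_group m" "D n\<lparr>carrier := H\<rparr> \<cong> D (n div m)"
      using semidirect_decomposition_rotation_kernel[OF n dec \<open>card N > 1\<close>] by blast
    then show ?thesis using iso_trans[OF KN] iso_trans[OF QH] by blast
  next
    case False
    then show ?thesis
      using semidirect_decomposition_reflection_kernel[OF n dec \<open>card H > 1\<close>] iso_trans[OF KN] iso_trans[OF QH]
      by blast
  qed
qed

theorem mainTheorem4:
  fixes n :: nat
  assumes "n > 0"
  shows
    \<comment> \<open>(1)\<close>
    "(\<forall>m::nat. m > 0 \<and> m dvd n \<and> coprime m (n div m) \<longrightarrow>
        (\<exists>\<phi>. \<phi> \<in> hom (dihedral_group (n div m)) (AutoGroup (integer_mod_group m)) \<and>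
              \<phi> (dih_a (n div m)) (1 mod int m) = 1 mod int m \<and>
              \<phi> (dih_x (n div m)) (1 mod int m) = (-1) mod int m) \<and>
        (\<forall>\<phi>. \<phi> \<in> hom (dihedral_group (n div m)) (AutoGroup (integer_mod_group m)) \<and>
              \<phi> (dih_a (n div m)) (1 mod int m) = 1 mod int m \<and>
              \<phi> (dih_x (n div m)) (1 mod int m) = (-1) mod int m \<longrightarrow>
              dihedral_group n \<cong> semidirect_product (integer_mod_group m) (dihedral_group (n div m)) \<phi>))
   \<and> \<comment> \<open>(2)\<close>
    (even n \<longrightarrow>
        (\<exists>\<psi>. \<psi> \<in> hom (integer_mod_group 2) (AutoGroup (dihedral_group (n div 2))) \<and>
              \<psi> 1 (dih_a (n div 2)) = inv\<^bsub>dihedral_group (n div 2)\<^esub> (dih_a (n div 2)) \<and>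
              \<psi> 1 (dih_x (n div 2)) = dih_a (n div 2) \<otimes>\<^bsub>dihedral_group (n div 2)\<^esub> dih_x (n div 2)) \<and>
        (\<forall>\<psi>. \<psi> \<in> hom (integer_mod_group 2) (AutoGroup (dihedral_group (n div 2))) \<and>
              \<psi> 1 (dih_a (n div 2)) = inv\<^bsub>dihedral_group (n div 2)\<^esub> (dih_a (n div 2)) \<and>
              \<psi> 1 (dih_x (n div 2)) = dih_a (n div 2) \<otimes>\<^bsub>dihedral_group (n div 2)\<^esub> dih_x (n div 2) \<longrightarrow>
              dihedral_group n \<cong> semidirect_product (dihedral_group (n div 2)) (integer_mod_group 2) \<psi>))
   \<and> \<comment> \<open>(3)\<close>
    (2 dvd n \<and> \<not> 4 dvd n \<longrightarrow>
        dihedral_group n \<cong> DirProd (dihedral_group (n div 2)) (integer_mod_group 2))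
   \<and> \<comment> \<open>(4)\<close>
    (\<forall>K :: 'a monoid. \<forall>Q :: 'b monoid. \<forall>\<phi>.
        group K \<and> group Q \<and> \<phi> \<in> hom Q (AutoGroup K) \<and>
        order K > 1 \<and> order Q > 1 \<and>
        dihedral_group n \<cong> semidirect_product K Q \<phi> \<longrightarrow>
        (\<exists>m::nat. m dvd n \<and> coprime m (n div m) \<and>
            K \<cong> integer_mod_group m \<and> Q \<cong> dihedral_group (n div m))
        \<or> (2 dvd n \<and> K \<cong> dihedral_group (n div 2) \<and> Q \<cong> integer_mod_group 2))"
proof -
  have pos: "n div m > 0" if "m dvd n" for m using assms that by (auto elim: dvdE)
  have odd: "odd (n div 2)" if "2 dvd n" "\<not> 4 dvd n" using that by (auto elim!: dvdE)
  show ?thesis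
  proof (intro conjI allI impI; (elim conjE)?)
  qed (metis hom_inversion_action inversion_action_generators pos,
      simp add: dihedral_group_iso_semidirect_cyclic[OF assms],
      metis hom_twist_action twist_action_generators pos dvd_mult_right,
      simp add: dihedral_group_iso_semidirect_dihedral[OF assms],
      simp add: dihedral_group_iso_DirProd odd,
      simp add: dihedral_group_semidirect_factors[OF assms])
qed

end
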